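(* In the setting below, let $B_t = \{i \in [n] : \tilde{x}_i\tilde{w}_t \leq -\frac{1}{2}\gamma\hat{w}_t\}$. If $\eta \geq \eta_0$, then for every integer $0\le t < \tau$, $$\left(1 - \frac{16}{\eta^3}\right)G(w_t) \leq \frac{1}{n}\sum_{i \in B_t}\frac{1}{\exp(a_t^i)+1} \leq G(w_t).$$
   Context: Dimension $d=2$. Data $x_1,\dots,x_n\in\mathbb{R}^2$ with $\|x_i\|\le 1$, linearly separable (some $w$ has $\langle w,x_i\rangle>0$ for all $i$). $F(w) = \frac{1}{n}\sum_{i=1}^n \log(1+\exp(-\langle w, x_i\rangle))$ and $G(w) = \frac{1}{n}\sum_{i=1}^n \frac{1}{\exp(\langle w, x_i\rangle)+1}$. Maximum margin $\gamma = \max_{\|w\|=1}\min_i \langle w, x_i\rangle$ with maximizer the unit vector $w_*$; $v_*$ is a fixed unit vector orthogonal to $w_*$. Gradient descent: $w_0=0$, $w_{t+1} = w_t - \eta\nabla F(w_t)$ with constant $\eta>0$. $\hat{w}_t = \langle w_t, w_*\rangle$, $\tilde{w}_t = \langle w_t, v_*\rangle$, $\tilde{x}_i = \langle x_i, v_*\rangle$, $a_t^i = \langle w_t, x_i\rangle$. $\tau = \min\{t\ge 0: F(w_t)\le 1/(8\eta)\}$. $\eta_0 = \max(n, \frac{32}{\gamma^2}\log\frac{256}{\gamma^2})$. *)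

theory Defs
  imports "HOL-Analysis.Analysis"
begin

definition logF :: "nat \<Rightarrow> (nat \<Rightarrow> real^2) \<Rightarrow> real^2 \<Rightarrow> real" where
  "logF n x w = (1 / real n) * (\<Sum>i<n. ln (1 + exp (- (w \<bullet> x i))))"

definition lossG :: "nat \<Rightarrow> (nat \<Rightarrow> real^2) \<Rightarrow> real^2 \<Rightarrow> real" where
  "lossG n x w = (1 / real n) * (\<Sum>i<n. 1 / (exp (w \<bullet> x i) + 1))"

definition margin :: "nat \<Rightarrow> (nat \<Rightarrow> real^2) \<Rightarrow> real^2 \<Rightarrow> real" where
  "margin n x u = Min ((\<lambda>i. u \<bullet> x i) ` {..<n})"

definition max_margin :: "nat \<Rightarrow> (nat \<Rightarrow> real^2) \<Rightarrow> real" where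
  "max_margin n x = (SUP u\<in>{u. norm u = 1}. margin n x u)"

end

theory Submission
  imports Defs
begin

(* Gradient descent only increases the component w_t . w_star along the max-margin
   direction, and the first step already raises it to at least eta gamma / 2, because every
   example has x_i . w_star >= gamma and all weights equal 1/2 at w_0 = 0.  In the orthonormal
   frame (w_star, v_star), an index outside B_t then has
   a_t^i >= gamma (w_t . w_star) / 2 >= eta gamma^2 / 4, so its weight 1 / (exp a + 1) is at
   most exp (-eta gamma^2 / 4) <= eta^-4 by the choice of eta.  Before tau, on the other hand,
   G(w_t) > 1 / (16 eta): either some a_t^i <= 0, and then G >= 1 / (2n) >= 1 / (2 eta), or all
   a_t^i >= 0 and F <= 2 G.  So the indices outside B_t contribute at most
   eta^-4 <= (16 / eta^3) G(w_t). *)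

(* The summand of G: minus the derivative of the logistic loss a \<mapsto> ln (1 + exp (- a)). *)
abbreviation logistic_weight :: "real \<Rightarrow> real" where
  "logistic_weight a \<equiv> 1 / (exp a + 1)"

lemma logistic_weight_pos: "0 < logistic_weight a"
  by (simp add: add_pos_pos)

lemma logistic_weight_le_exp_neg: "logistic_weight a \<le> exp (- a)"
  by (simp add: exp_minus divide_inverse le_imp_inverse_le)

lemma logistic_weight_ge_half: "a \<le> 0 \<Longrightarrow> 1 / 2 \<le> logistic_weight a"
  by (simp add: field_simps add_pos_pos)

lemma ln_one_plus_exp_neg_le_logistic_weight:
  assumes "0 \<le> a"
  shows "ln (1 + exp (- a)) \<le> 2 * logistic_weight a"
proof -
  have "1 \<le> exp a" using assms by simp
  have "ln (1 + exp (- a)) \<le> exp (- a)" by (rule ln_add_one_self_le_self) simp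
  also have "\<dots> = 1 / exp a" by (simp add: exp_minus divide_inverse)
  also have "\<dots> \<le> 2 / (exp a + 1)" using \<open>1 \<le> exp a\<close> by (simp add: field_simps add_pos_pos)
  finally show ?thesis by simp
qed

lemma exp_neg_le_inverse_power4:
  fixes c \<eta> :: real
  assumes c: "0 < c" "c \<le> 1" and \<eta>: "32 / c * ln (256 / c) \<le> \<eta>"
  shows "exp (- (\<eta> * c / 4)) \<le> 1 / \<eta> ^ 4"
proof -
  define s where "s = \<eta> * c / 32"
  have "0 < ln (256 / c)" using c by (simp add: field_simps)
  moreover have "ln (256 / c) \<le> s" using \<eta> c by (simp add: s_def field_simps)
  ultimately have s: "0 < s" "ln (256 / c) \<le> s" by linarith+
  have \<eta>_eq: "\<eta> = 32 * s / c" using c by (simp add: s_def)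
  then have "0 < \<eta>" using s c by simp
  \<comment> \<open>\<open>ln s \<le> s - 1\<close> and \<open>s \<ge> ln (256 / c)\<close> each pay for half of \<open>4 * ln \<eta>\<close>.\<close>
  have "4 * ln \<eta> \<le> 4 * ln (256 * s / c)"
    using \<open>0 < \<eta>\<close> s c by (simp add: \<eta>_eq divide_right_mono)
  also have "\<dots> = 4 * (ln (256 / c) + ln s)"
    using ln_mult[of "256 / c" s] s c by simp
  also have "\<dots> \<le> 8 * s"
    using ln_le_minus_one[OF \<open>0 < s\<close>] s(2) by (simp add: algebra_simps)
  finally have "- (\<eta> * c / 4) \<le> - ln (\<eta> ^ 4)"
    using \<open>0 < \<eta>\<close> by (simp add: s_def ln_realpow)
  then have "exp (- (\<eta> * c / 4)) \<le> exp (- ln (\<eta> ^ 4))" by simp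
  also have "\<dots> = 1 / \<eta> ^ 4" using \<open>0 < \<eta>\<close> by (simp add: exp_minus divide_inverse)
  finally show ?thesis .
qed

lemma inner_expand_orthonormal_pair:
  fixes u v p q :: "'a::euclidean_space"
  assumes "DIM('a) = 2" and "norm u = 1" and "norm v = 1" and "u \<bullet> v = 0"
  shows "p \<bullet> q = (p \<bullet> u) * (q \<bullet> u) + (p \<bullet> v) * (q \<bullet> v)"
proof -
  have uu: "u \<bullet> u = 1" and vv: "v \<bullet> v = 1" and vu: "v \<bullet> u = 0"
    using assms by (simp_all add: norm_eq_1 inner_commute)
  define r where "r = p - (p \<bullet> u) *\<^sub>R u - (p \<bullet> v) *\<^sub>R v"
  have ru: "r \<bullet> u = 0" and rv: "r \<bullet> v = 0"
    using uu vv assms(4) vu by (simp_all add: r_def inner_diff_left)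
  have "r = 0"
  proof (rule ccontr)
    assume "r \<noteq> 0"
    have distinct: "u \<noteq> v" "r \<noteq> u" "r \<noteq> v"
      using uu vv ru rv assms(4) by auto
    have "independent {u, v, r}"
      using \<open>r \<noteq> 0\<close> assms(2,3) ru rv assms(4) vu
      by (intro pairwise_orthogonal_independent)
         (auto simp: pairwise_def orthogonal_def inner_commute)
    then have "card {u, v, r} \<le> 2"
      using independent_bound assms(1) by metis
    with distinct show False by auto
  qed
  then have "p = (p \<bullet> u) *\<^sub>R u + (p \<bullet> v) *\<^sub>R v"
    by (simp add: r_def algebra_simps)
  then have "p \<bullet> q = (p \<bullet> u) * (u \<bullet> q) + (p \<bullet> v) * (v \<bullet> q)"
    by (metis inner_add_left inner_scaleR_left)
  then show ?thesis
    by (simp add: inner_commute)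
qed

lemma GDERIV_unique:
  fixes f :: "'a::real_inner \<Rightarrow> real"
  assumes "GDERIV f x :> D" and "GDERIV f x :> D'"
  shows "D = D'"
proof -
  have "(\<lambda>h. h \<bullet> D) = (\<lambda>h. h \<bullet> D')"
    using assms unfolding gderiv_def by (rule has_derivative_unique)
  then have "(D - D') \<bullet> (D - D') = 0"
    by (metis inner_diff_right right_minus_eq)
  then show ?thesis by simp
qed

lemma has_derivative_ln_one_plus_exp_neg_inner:
  fixes a :: "'a::real_inner"
  shows "((\<lambda>w. ln (1 + exp (- (w \<bullet> a)))) has_derivative
           (\<lambda>h. - logistic_weight (w \<bullet> a) * (h \<bullet> a))) (at w)"
proof -
  have "((\<lambda>w. ln (1 + exp (- (w \<bullet> a)))) has_derivative
          (\<lambda>h. exp (- (w \<bullet> a)) * - (h \<bullet> a) / (1 + exp (- (w \<bullet> a))))) (at w)"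
    by (auto intro!: derivative_eq_intros ext simp: add_pos_pos divide_inverse)
  moreover have "exp (- (w \<bullet> a)) * - (h \<bullet> a) / (1 + exp (- (w \<bullet> a)))
      = - logistic_weight (w \<bullet> a) * (h \<bullet> a)" for h
    by (simp add: exp_minus field_simps add_pos_pos)
  ultimately show ?thesis by simp
qed

lemma logF_has_gradient:
  "GDERIV (logF n x) w :> - ((1 / real n) *\<^sub>R (\<Sum>i<n. logistic_weight (w \<bullet> x i) *\<^sub>R x i))"
proof -
  have "((\<lambda>w. (1 / real n) * (\<Sum>i<n. ln (1 + exp (- (w \<bullet> x i))))) has_derivative
          (\<lambda>h. (1 / real n) * (\<Sum>i<n. - logistic_weight (w \<bullet> x i) * (h \<bullet> x i)))) (at w)"
    by (intro has_derivative_mult_right has_derivative_sum has_derivative_ln_one_plus_exp_neg_inner)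
  then show ?thesis
    unfolding gderiv_def logF_def[abs_def]
    by (simp add: inner_sum_right sum_negf)
qed

lemma logF_gradient_step:
  assumes "GDERIV (logF n x) w :> g"
  shows "w - \<eta> *\<^sub>R g = w + (\<eta> / real n) *\<^sub>R (\<Sum>i<n. logistic_weight (w \<bullet> x i) *\<^sub>R x i)"
  using GDERIV_unique[OF assms logF_has_gradient] by simp

lemma margin_le_inner: "i < n \<Longrightarrow> margin n x u \<le> u \<bullet> x i"
  unfolding margin_def by (intro Min_le) auto

lemma margin_le_one:
  assumes "0 < n" and "\<forall>i<n. norm (x i) \<le> 1" and "norm u \<le> 1"
  shows "margin n x u \<le> 1"
proof -
  have "margin n x u \<le> u \<bullet> x 0" using assms(1) by (rule margin_le_inner)
  also have "\<dots> \<le> norm u * norm (x 0)" by (rule norm_cauchy_schwarz)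
  also have "\<dots> \<le> 1" using assms by (simp add: mult_le_one)
  finally show ?thesis .
qed

lemma max_margin_pos:
  assumes n: "0 < n" and x_norm: "\<forall>i<n. norm (x i) \<le> 1"
    and separable: "\<exists>u. \<forall>i<n. u \<bullet> x i > 0"
  shows "0 < max_margin n x"
proof -
  obtain u where u: "\<forall>i<n. u \<bullet> x i > 0" using separable by blast
  then have "u \<noteq> 0" using n by auto
  define v where "v = u /\<^sub>R norm u"
  have "norm v = 1" using \<open>u \<noteq> 0\<close> by (simp add: v_def)
  have "{..<n} \<noteq> {}" using n by auto
  then have "0 < margin n x v"
    unfolding margin_def using u \<open>u \<noteq> 0\<close> by (auto simp: Min_gr_iff v_def)
  also have "\<dots> \<le> max_margin n x"
    unfolding max_margin_def using \<open>norm v = 1\<close> margin_le_one[OF n x_norm]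
    by (intro cSUP_upper bdd_aboveI2[where M = 1]) auto
  finally show ?thesis .
qed

lemma gd_logF_inner_ge:
  fixes u :: "real^2"
  assumes n: "0 < n" and \<eta>: "0 < \<eta>" and c: "0 \<le> c" and margin_u: "\<forall>i<n. c \<le> x i \<bullet> u"
    and w0: "w 0 = 0"
    and gd: "\<forall>s. \<exists>g. GDERIV (logF n x) (w s) :> g \<and> w (Suc s) = w s - \<eta> *\<^sub>R g"
  shows "\<eta> * c / 2 \<le> w (Suc k) \<bullet> u"
proof -
  have step: "w (Suc s) \<bullet> u
      = w s \<bullet> u + \<eta> / real n * (\<Sum>i<n. logistic_weight (w s \<bullet> x i) * (x i \<bullet> u))" for s
  proof -
    obtain g where g: "GDERIV (logF n x) (w s) :> g" and upd: "w (Suc s) = w s - \<eta> *\<^sub>R g"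
      using gd by blast
    have "w (Suc s) = w s + (\<eta> / real n) *\<^sub>R (\<Sum>i<n. logistic_weight (w s \<bullet> x i) *\<^sub>R x i)"
      unfolding upd by (rule logF_gradient_step[OF g])
    then show ?thesis by (simp add: inner_add_left inner_sum_left)
  qed
  have mono: "w s \<bullet> u \<le> w (Suc s) \<bullet> u" for s
  proof -
    have term_nonneg: "0 \<le> logistic_weight (w s \<bullet> x i) * (x i \<bullet> u)" if "i < n" for i
      using margin_u c that logistic_weight_pos[of "w s \<bullet> x i"]
      by (meson mult_nonneg_nonneg order_trans less_imp_le)
    have "0 \<le> \<eta> / real n * (\<Sum>i<n. logistic_weight (w s \<bullet> x i) * (x i \<bullet> u))"
      using \<eta> term_nonneg by (intro mult_nonneg_nonneg[OF _ sum_nonneg]) auto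
    then show ?thesis
      unfolding step by linarith
  qed
  have "real n * (c / 2) \<le> (\<Sum>i<n. logistic_weight (w 0 \<bullet> x i) * (x i \<bullet> u))"
    using sum_mono[of "{..<n}" "\<lambda>_. c / 2"] margin_u w0 by simp
  then have "\<eta> / real n * (real n * (c / 2))
      \<le> \<eta> / real n * (\<Sum>i<n. logistic_weight (w 0 \<bullet> x i) * (x i \<bullet> u))"
    using \<eta> by (intro mult_left_mono) auto
  then have first: "\<eta> * c / 2 \<le> w (Suc 0) \<bullet> u"
    using step[of 0] w0 n by simp
  show ?thesis
  proof (induction k)
    case 0 then show ?case using first by simp
  next
    case (Suc k) then show ?case using mono order_trans by blast
  qed
qed

lemma logF_le_twice_lossG:
  assumes "\<forall>i<n. 0 \<le> w \<bullet> x i"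
  shows "logF n x w \<le> 2 * lossG n x w"
proof -
  have "(\<Sum>i<n. ln (1 + exp (- (w \<bullet> x i)))) \<le> (\<Sum>i<n. 2 * logistic_weight (w \<bullet> x i))"
    using assms by (intro sum_mono ln_one_plus_exp_neg_le_logistic_weight) simp
  moreover have "2 * lossG n x w = 1 / real n * (\<Sum>i<n. 2 * logistic_weight (w \<bullet> x i))"
    unfolding lossG_def by (simp add: sum_distrib_left)
  ultimately show ?thesis
    unfolding logF_def by (simp add: divide_right_mono)
qed

lemma lossG_ge_of_inner_nonpos:
  assumes "i < n" and "w \<bullet> x i \<le> 0"
  shows "1 / (2 * real n) \<le> lossG n x w"
proof -
  have "1 / 2 \<le> logistic_weight (w \<bullet> x i)" using assms(2) by (rule logistic_weight_ge_half)
  also have "\<dots> \<le> (\<Sum>j<n. logistic_weight (w \<bullet> x j))"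
    using assms(1) logistic_weight_pos by (intro member_le_sum) (auto intro: less_imp_le)
  finally have "1 / 2 / real n \<le> (\<Sum>j<n. logistic_weight (w \<bullet> x j)) / real n"
    by (rule divide_right_mono) simp
  then show ?thesis
    unfolding lossG_def by simp
qed

lemma lossG_gt_of_logF_gt:
  assumes n: "0 < n" and \<eta>: "real n \<le> \<eta>" and logF_gt: "1 / (8 * \<eta>) < logF n x w"
  shows "1 / (16 * \<eta>) < lossG n x w"
proof (cases "\<forall>i<n. 0 \<le> w \<bullet> x i")
  case True
  then show ?thesis using logF_gt logF_le_twice_lossG[OF True] by simp
next
  case False
  then obtain i where "i < n" and "w \<bullet> x i \<le> 0" by (auto simp: not_le)
  have "1 / (16 * \<eta>) < 1 / (2 * \<eta>)" using n \<eta> by (simp add: frac_less2)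
  also have "\<dots> \<le> 1 / (2 * real n)" using n \<eta> by (simp add: frac_le)
  also have "\<dots> \<le> lossG n x w" using \<open>i < n\<close> \<open>w \<bullet> x i \<le> 0\<close> by (rule lossG_ge_of_inner_nonpos)
  finally show ?thesis .
qed

lemma lossG_split:
  assumes "A \<subseteq> {..<n}"
  shows "lossG n x w = 1 / real n * (\<Sum>i\<in>A. logistic_weight (w \<bullet> x i))
                     + 1 / real n * (\<Sum>i\<in>{..<n} - A. logistic_weight (w \<bullet> x i))"
  unfolding lossG_def sum.subset_diff[OF assms finite_lessThan] by (simp add: distrib_left add.commute)

definition bad_set :: "nat \<Rightarrow> (nat \<Rightarrow> real^2) \<Rightarrow> real \<Rightarrow> real^2 \<Rightarrow> real^2 \<Rightarrow> real^2 \<Rightarrow> nat set" where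
  "bad_set n x \<gamma> ws vs w = {i. i < n \<and> (x i \<bullet> vs) * (w \<bullet> vs) \<le> - (1/2) * \<gamma> * (w \<bullet> ws)}"

lemma inner_ge_outside_bad_set:
  fixes u v w y :: "'a::euclidean_space"
  assumes "DIM('a) = 2" and "norm u = 1" and "norm v = 1" and "u \<bullet> v = 0"
    and "\<gamma> \<le> y \<bullet> u" and "0 \<le> w \<bullet> u" and "- (1/2) * \<gamma> * (w \<bullet> u) < (y \<bullet> v) * (w \<bullet> v)"
  shows "\<gamma> * (w \<bullet> u) / 2 \<le> w \<bullet> y"
proof -
  have "w \<bullet> y = (w \<bullet> u) * (y \<bullet> u) + (w \<bullet> v) * (y \<bullet> v)"
    using assms(1-4) by (rule inner_expand_orthonormal_pair)
  moreover have "(w \<bullet> u) * \<gamma> \<le> (w \<bullet> u) * (y \<bullet> u)"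
    using assms(5,6) by (rule mult_left_mono)
  ultimately show ?thesis
    using assms(7) by (simp add: algebra_simps)
qed

lemma lossG_outside_bad_set_le:
  fixes x :: "nat \<Rightarrow> real^2"
  assumes ws: "norm ws = 1" and vs: "norm vs = 1" and orth: "ws \<bullet> vs = 0"
    and \<gamma>: "0 < \<gamma>" "\<gamma> \<le> 1" and margin_ws: "\<forall>i<n. \<gamma> \<le> x i \<bullet> ws"
    and \<eta>: "0 < \<eta>" "32 / \<gamma>\<^sup>2 * ln (256 / \<gamma>\<^sup>2) \<le> \<eta>"
    and w_ws: "\<eta> * \<gamma> / 2 \<le> w \<bullet> ws"
  shows "1 / real n * (\<Sum>i\<in>{..<n} - bad_set n x \<gamma> ws vs w. logistic_weight (w \<bullet> x i))
           \<le> 1 / \<eta> ^ 4"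
proof -
  have "0 \<le> \<eta> * \<gamma> / 2" using \<gamma> \<eta> by simp
  then have "0 \<le> w \<bullet> ws" using w_ws by linarith
  have "exp (- (\<eta> * \<gamma>\<^sup>2 / 4)) \<le> 1 / \<eta> ^ 4"
    using \<gamma> \<eta>(2) by (intro exp_neg_le_inverse_power4) (simp_all add: power_le_one)
  have pointwise: "logistic_weight (w \<bullet> x i) \<le> 1 / \<eta> ^ 4"
    if i: "i \<in> {..<n} - bad_set n x \<gamma> ws vs w" for i
  proof -
    have "\<gamma> * (w \<bullet> ws) / 2 \<le> w \<bullet> x i"
      using i margin_ws \<open>0 \<le> w \<bullet> ws\<close>
      by (intro inner_ge_outside_bad_set[OF _ ws vs orth]) (auto simp: bad_set_def)
    moreover have "\<gamma> * (\<eta> * \<gamma> / 2) / 2 \<le> \<gamma> * (w \<bullet> ws) / 2"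
      using w_ws \<gamma> by simp
    ultimately have "exp (- (w \<bullet> x i)) \<le> exp (- (\<eta> * \<gamma>\<^sup>2 / 4))"
      by (simp add: power2_eq_square)
    then show ?thesis
      using logistic_weight_le_exp_neg[of "w \<bullet> x i"] \<open>exp (- (\<eta> * \<gamma>\<^sup>2 / 4)) \<le> 1 / \<eta> ^ 4\<close>
      by linarith
  qed
  have "(\<Sum>i\<in>{..<n} - bad_set n x \<gamma> ws vs w. logistic_weight (w \<bullet> x i))
      \<le> (\<Sum>i\<in>{..<n} - bad_set n x \<gamma> ws vs w. 1 / \<eta> ^ 4)"
    by (rule sum_mono) (rule pointwise)
  also have "\<dots> = real (card ({..<n} - bad_set n x \<gamma> ws vs w)) * (1 / \<eta> ^ 4)"
    by simp
  also have "\<dots> \<le> real n * (1 / \<eta> ^ 4)"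
    using card_mono[of "{..<n}" "{..<n} - bad_set n x \<gamma> ws vs w"] \<eta>
    by (intro mult_right_mono) auto
  finally show ?thesis
    by (cases "n = 0") (simp_all add: field_simps)
qed

lemma gd_lossG_outside_bad_set_le:
  fixes x :: "nat \<Rightarrow> real^2"
  assumes n: "0 < n" and ws: "norm ws = 1" and vs: "norm vs = 1" and orth: "ws \<bullet> vs = 0"
    and \<gamma>: "0 < \<gamma>" "\<gamma> \<le> 1" and margin_ws: "\<forall>i<n. \<gamma> \<le> x i \<bullet> ws"
    and \<eta>: "0 < \<eta>" "32 / \<gamma>\<^sup>2 * ln (256 / \<gamma>\<^sup>2) \<le> \<eta>"
    and w0: "w 0 = 0"
    and gd: "\<forall>s. \<exists>g. GDERIV (logF n x) (w s) :> g \<and> w (Suc s) = w s - \<eta> *\<^sub>R g"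
  shows "1 / real n * (\<Sum>i\<in>{..<n} - bad_set n x \<gamma> ws vs (w t). logistic_weight (w t \<bullet> x i))
           \<le> 1 / \<eta> ^ 4"
proof (cases t)
  case 0
  then show ?thesis using w0 by (simp add: bad_set_def lessThan_def)
next
  case (Suc k)
  then have "\<eta> * \<gamma> / 2 \<le> w t \<bullet> ws"
    using gd_logF_inner_ge[OF n \<eta>(1) _ margin_ws w0 gd] \<gamma> by simp
  then show ?thesis
    by (rule lossG_outside_bad_set_le[OF ws vs orth \<gamma> margin_ws \<eta>])
qed

lemma inverse_power4_le_lossG:
  assumes "0 < n" and "real n \<le> \<eta>" and "1 / (8 * \<eta>) < logF n x w"
  shows "1 / \<eta> ^ 4 \<le> 16 / \<eta> ^ 3 * lossG n x w"
proof -
  have "0 < \<eta>" using assms(1,2) by simp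
  have "1 / \<eta> ^ 4 = 16 / \<eta> ^ 3 * (1 / (16 * \<eta>))"
    using \<open>0 < \<eta>\<close> by (simp add: field_simps eval_nat_numeral)
  also have "\<dots> \<le> 16 / \<eta> ^ 3 * lossG n x w"
    using lossG_gt_of_logF_gt[OF assms] \<open>0 < \<eta>\<close> by (intro mult_left_mono) auto
  finally show ?thesis .
qed

theorem lemma14:
  fixes n :: nat and x :: "nat \<Rightarrow> real^2" and \<eta> :: real
    and w :: "nat \<Rightarrow> real^2" and ws vs :: "real^2" and t :: nat
  assumes n_pos: "n > 0"
    and x_norm: "\<forall>i<n. norm (x i) \<le> 1"
    and separable: "\<exists>u. \<forall>i<n. u \<bullet> x i > 0"
    and ws_unit: "norm ws = 1"
    and ws_max: "margin n x ws = max_margin n x"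
    and vs_unit: "norm vs = 1"
    and vs_orth: "ws \<bullet> vs = 0"
    and eta_pos: "\<eta> > 0"
    and w0: "w 0 = 0"
    and gd: "\<forall>s. \<exists>g. GDERIV (logF n x) (w s) :> g \<and> w (Suc s) = w s - \<eta> *\<^sub>R g"
    and eta_large: "\<eta> \<ge> max (real n)
          (32 / (max_margin n x)\<^sup>2 * ln (256 / (max_margin n x)\<^sup>2))"
    and t_lt_tau: "\<forall>s\<le>t. logF n x (w s) > 1 / (8 * \<eta>)"
  shows "(1 - 16 / \<eta> ^ 3) * lossG n x (w t)
           \<le> (1 / real n) * (\<Sum>i\<in>{i. i < n \<and>
                 (x i \<bullet> vs) * (w t \<bullet> vs) \<le> - (1/2) * max_margin n x * (w t \<bullet> ws)}.
                 1 / (exp (w t \<bullet> x i) + 1))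
       \<and> (1 / real n) * (\<Sum>i\<in>{i. i < n \<and>
                 (x i \<bullet> vs) * (w t \<bullet> vs) \<le> - (1/2) * max_margin n x * (w t \<bullet> ws)}.
                 1 / (exp (w t \<bullet> x i) + 1))
           \<le> lossG n x (w t)"
proof -
  define \<gamma> where "\<gamma> = max_margin n x"
  define B where "B = bad_set n x \<gamma> ws vs (w t)"
  have \<gamma>: "0 < \<gamma>" "\<gamma> \<le> 1"
    using max_margin_pos[OF n_pos x_norm separable] margin_le_one[OF n_pos x_norm, of ws] ws_unit ws_max
    by (simp_all add: \<gamma>_def)
  have margin_ws: "\<forall>i<n. \<gamma> \<le> x i \<bullet> ws"
    using margin_le_inner ws_max unfolding \<gamma>_def by (metis inner_commute)
  let ?rest = "1 / real n * (\<Sum>i\<in>{..<n} - B. logistic_weight (w t \<bullet> x i))"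
  have "?rest \<le> 1 / \<eta> ^ 4"
    unfolding B_def using n_pos ws_unit vs_unit vs_orth \<gamma> margin_ws eta_pos eta_large w0 gd
    by (intro gd_lossG_outside_bad_set_le) (simp_all add: \<gamma>_def)
  moreover have "1 / \<eta> ^ 4 \<le> 16 / \<eta> ^ 3 * lossG n x (w t)"
    using inverse_power4_le_lossG n_pos eta_large t_lt_tau by simp
  moreover have "0 \<le> ?rest"
    using logistic_weight_pos by (simp add: sum_nonneg less_imp_le)
  moreover have "lossG n x (w t) = 1 / real n * (\<Sum>i\<in>B. logistic_weight (w t \<bullet> x i)) + ?rest"
    by (rule lossG_split) (auto simp: B_def bad_set_def)
  ultimately show ?thesis
    unfolding \<gamma>_def[symmetric] bad_set_def[symmetric] B_def[symmetric] left_diff_distrib mult_1_left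
    by linarith
qed

end
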